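(* Let $(X_t)_{t\ge1}$ be random variables in $[0,1]$ with average conditional means $(\mu_t)_{t\ge1}$, and let $(\widehat X_t)_{t\ge1}$ be a predictable sequence taking values in $[0,1)$. Fix $\kappa>0$ and $\alpha\in(0,1)$, and set $Z=\Phi(1/\kappa)-\Phi(-1/\kappa)$, $S_t=\sum_{i\le t}X_i$, $U_t=(2\kappa^2)^{-1}+\sum_{i\le t}\psi_E(|X_i-\widehat X_i|)$. Define \[ C_t^{\mathrm{mix}}:=\left\{m\in\mathbb{R}:\ I(S_t-tm;\,U_t)<\frac{\kappa Z\sqrt{2\pi}}{\alpha}\right\}. \] Then $P(\mu_t\in C_t^{\mathrm{mix}}\text{ for all }t\ge1)\ge1-\alpha$. Moreover, if $\mu_t\equiv\mu$ is constant in $t$, then $P(\mu\in\bigcap_{j\le t}C_j^{\mathrm{mix}}\text{ for all }t\ge 1)\ge1-\alpha$.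
   Context: All random variables live on a common probability space. $\mathcal F_t=\sigma(X_1,\dots,X_t)$, and $\mathcal F_0$ is trivial. A sequence $(Y_t)$ is predictable if each $Y_t$ is $\mathcal F_{t-1}$-measurable. The average conditional mean is $\mu_t:=t^{-1}\sum_{j\le t}\mathbb{E}[X_j\mid\mathcal F_{j-1}]$. $\psi_E(x)=-\log(1-x)-x$ for $x\in[0,1)$, and $\psi_E(1):=+\infty$, with the conventions $\exp(-\infty)=0$ and $0\cdot\infty=0$. $\Phi$ is the standard normal CDF. For $y\in\mathbb{R}$ and $v\in[0,\infty]$, $I(y;v):=\int_{-1}^{1}\exp\{y\xi-v\xi^2\}\,d\xi$. *)

theory Defs
  imports "HOL-Probability.Probability"
begin

definition natfilt :: "'a measure \<Rightarrow> (nat \<Rightarrow> 'a \<Rightarrow> real) \<Rightarrow> nat \<Rightarrow> 'a measure" where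
  "natfilt M X t = sigma (space M)
     {X i -` B \<inter> space M | i B. i \<in> {1..t} \<and> B \<in> sets borel}"

definition avg_cond_mean :: "'a measure \<Rightarrow> (nat \<Rightarrow> 'a \<Rightarrow> real) \<Rightarrow> nat \<Rightarrow> 'a \<Rightarrow> real" where
  "avg_cond_mean M X t \<omega> =
     (1 / real t) * (\<Sum>j\<in>{1..t}. real_cond_exp M (natfilt M X (j - 1)) (X j) \<omega>)"

definition psiE :: "real \<Rightarrow> ereal" where
  "psiE x = (if x < 1 then ereal (- ln (1 - x) - x) else \<infinity>)"

text \<open>Integrand exp(y xi - v xi^2) for v in [0,infinity], with exp(-infinity) = 0 and 0*infinity = 0.\<close>
definition Iintegrand :: "real \<Rightarrow> ereal \<Rightarrow> real \<Rightarrow> real" where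
  "Iintegrand y v \<xi> =
     (if v = \<infinity> then (if \<xi> = 0 then 1 else 0)
      else exp (y * \<xi> - real_of_ereal v * \<xi>\<^sup>2))"

definition Iint :: "real \<Rightarrow> ereal \<Rightarrow> real" where
  "Iint y v = (LBINT \<xi>:{-1..1}. Iintegrand y v \<xi>)"

definition Phi :: "real \<Rightarrow> real" where
  "Phi x = measure (density lborel std_normal_density) {..x}"

end

(*
  Write m_i for the conditional mean of X_i given X_1, ..., X_(i-1). For every xi in [-1, 1] the
  product over i <= t of exp (xi (X_i - m_i) - psi_E (|X_i - Xhat_i|) xi^2) is a nonnegative
  supermartingale: by Fan's inequality each factor is at most exp (xi (Xhat_i - m_i)) times
  1 + xi (X_i - Xhat_i), whose conditional mean is exp (-x) (1 + x) <= 1 for x = xi (m_i - Xhat_i).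
  Mixing over xi with the weight exp (-xi^2 / (2 kappa^2)) on [-1, 1] gives the supermartingale
  I(S_t - t mu_t; U_t), which starts at I(0; 1/(2 kappa^2)) = kappa Z sqrt (2 pi). By Ville's
  inequality it ever reaches kappa Z sqrt (2 pi) / alpha with probability at most alpha, and
  outside that event mu_t lies in C_t^mix for all t.
*)

theory Submission
  imports Defs
begin

section \<open>Fan's inequality\<close>

definition psi :: "real \<Rightarrow> real" where
  "psi x = - ln (1 - x) - x"

lemma psiE_eq_psi: "x < 1 \<Longrightarrow> psiE x = ereal (psi x)"
  by (simp add: psiE_def psi_def)

lemma psi_nonneg: "x < 1 \<Longrightarrow> 0 \<le> psi x"
  unfolding psi_def using ln_le_minus_one[of "1 - x"] by simp

lemma psiE_nonneg: "0 \<le> psiE x"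
  using psi_nonneg[of x] by (simp add: psiE_def psi_def)

lemma half_sq_le_psi:
  assumes "0 \<le> x" "x < 1"
  shows "x\<^sup>2 / 2 \<le> psi x"
proof -
  let ?f = "\<lambda>x. psi x - x\<^sup>2 / 2"
  have "?f 0 \<le> ?f x"
  proof (rule DERIV_nonneg_imp_increasing_open[OF assms(1)])
    fix y assume y: "0 < y" "y < x"
    have "DERIV ?f y :> 1 / (1 - y) - 1 - y"
      unfolding psi_def using y assms by (auto intro!: derivative_eq_intros simp: field_simps)
    moreover have "0 \<le> 1 / (1 - y) - 1 - y"
      using y assms by (simp add: field_simps power2_eq_square)
    ultimately show "\<exists>d. DERIV ?f y :> d \<and> 0 \<le> d" by blast
  qed (use assms in \<open>auto simp: psi_def intro!: continuous_intros\<close>)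
  then show ?thesis by (simp add: psi_def)
qed

lemma psi_le_sq_div:
  assumes "0 \<le> x" "x < 1"
  shows "2 * psi x \<le> x\<^sup>2 / (1 - x)"
proof -
  let ?f = "\<lambda>x. x\<^sup>2 - 2 * (1 - x) * psi x"
  have "?f 0 \<le> ?f x"
  proof (rule DERIV_nonneg_imp_increasing_open[OF assms(1)])
    fix y assume y: "0 < y" "y < x"
    have "y < 1" using y assms by simp
    then have "DERIV ?f y :> 2 * psi y"
      unfolding psi_def
      by (auto intro!: derivative_eq_intros simp: algebra_simps) (simp add: field_simps)
    then show "\<exists>d. DERIV ?f y :> d \<and> 0 \<le> d"
      using psi_nonneg[of y] y assms by auto
  qed (use assms in \<open>auto simp: psi_def intro!: continuous_intros\<close>)
  then show ?thesis using assms by (simp add: psi_def field_simps)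
qed

lemma psi_div_sq_mono:
  assumes "0 < b" "b \<le> a" "a < 1"
  shows "psi b / b\<^sup>2 \<le> psi a / a\<^sup>2"
proof (rule DERIV_nonneg_imp_increasing_open[OF assms(2)])
  fix y assume y: "b < y" "y < a"
  have "DERIV (\<lambda>x. psi x / x\<^sup>2) y :> (y / (1 - y) * y\<^sup>2 - psi y * (2 * y)) / (y\<^sup>2)\<^sup>2"
    unfolding psi_def using y assms
    by (auto intro!: derivative_eq_intros simp: field_simps power2_eq_square)
  moreover have "0 \<le> y / (1 - y) * y\<^sup>2 - psi y * (2 * y)"
  proof -
    have "2 * psi y * y \<le> y\<^sup>2 / (1 - y) * y"
      using psi_le_sq_div[of y] y assms by (intro mult_right_mono) auto
    then show ?thesis by (simp add: field_simps power2_eq_square)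
  qed
  ultimately show "\<exists>d. DERIV (\<lambda>x. psi x / x\<^sup>2) y :> d \<and> 0 \<le> d" by auto
qed (use assms in \<open>auto simp: psi_def intro!: continuous_intros\<close>)

lemma ln_add_one_ge_sub_half_sq:
  assumes "0 \<le> (u::real)"
  shows "u - u\<^sup>2 / 2 \<le> ln (1 + u)"
proof -
  let ?f = "\<lambda>u. ln (1 + u) - (u - u\<^sup>2 / 2)"
  have "?f 0 \<le> ?f u"
  proof (rule DERIV_nonneg_imp_increasing_open[OF assms])
    fix y assume y: "0 < y" "y < u"
    have "DERIV ?f y :> 1 / (1 + y) - 1 + y"
      using y by (auto intro!: derivative_eq_intros simp: field_simps)
    moreover have "0 \<le> 1 / (1 + y) - 1 + y"
      using y by (simp add: field_simps power2_eq_square)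
    ultimately show "\<exists>d. DERIV ?f y :> d \<and> 0 \<le> d" by blast
  qed (use assms in \<open>auto intro!: continuous_intros\<close>)
  then show ?thesis by simp
qed

text \<open>With \<open>u = \<xi> d\<close> and \<open>a = \<bar>d\<bar>\<close> this says \<open>u - ln (1 + u) \<le> u\<^sup>2 psi a / a\<^sup>2\<close> for
  \<open>\<bar>u\<bar> \<le> a\<close>: the ratio \<open>(u - ln (1 + u)) / u\<^sup>2\<close> is at most \<open>1/2\<close> for \<open>u \<ge> 0\<close>, and at
  \<open>u = -b\<close> it equals \<open>psi b / b\<^sup>2\<close>, which increases with \<open>b\<close>.\<close>

lemma fan_inequality:
  assumes "\<bar>\<xi>\<bar> \<le> 1" "\<bar>d\<bar> < 1"
  shows "exp (\<xi> * d - psi \<bar>d\<bar> * \<xi>\<^sup>2) \<le> 1 + \<xi> * d"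
proof (cases "d = 0")
  case True
  then show ?thesis by (simp add: psi_def)
next
  case False
  define a u where "a = \<bar>d\<bar>" and "u = \<xi> * d"
  have a: "0 < a" "a < 1" using False assms by (auto simp: a_def)
  have ua: "\<bar>u\<bar> \<le> a"
    unfolding u_def a_def using assms by (simp add: abs_mult mult_left_le_one_le)
  have xi_sq: "\<xi>\<^sup>2 = u\<^sup>2 / a\<^sup>2"
    unfolding u_def a_def using False by (simp add: power_mult_distrib)
  have "u - psi a * (u\<^sup>2 / a\<^sup>2) \<le> ln (1 + u)"
  proof (cases "0 \<le> u")
    case True
    have "1 / 2 \<le> psi a / a\<^sup>2"
      using half_sq_le_psi[of a] a by (simp add: field_simps)
    then have "u\<^sup>2 * (1 / 2) \<le> u\<^sup>2 * (psi a / a\<^sup>2)"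
      by (intro mult_left_mono) auto
    then show ?thesis using ln_add_one_ge_sub_half_sq[OF True] by (simp add: mult.commute)
  next
    case False
    have "psi (- u) / (- u)\<^sup>2 \<le> psi a / a\<^sup>2"
      using psi_div_sq_mono[of "- u" a] False ua a by simp
    then have "psi (- u) \<le> psi a * (u\<^sup>2 / a\<^sup>2)"
      using False by (simp add: field_simps)
    then show ?thesis by (simp add: psi_def)
  qed
  then have "exp (u - psi a * (u\<^sup>2 / a\<^sup>2)) \<le> exp (ln (1 + u))"
    by simp
  also have "\<dots> = 1 + u"
    using ua a by simp
  finally show ?thesis by (simp add: xi_sq a_def u_def)
qed

section \<open>The mixture integrand\<close>

lemma Iintegrand_nonneg: "0 \<le> Iintegrand y v \<xi>"
  by (simp add: Iintegrand_def)

lemma Iintegrand_mult: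
  assumes "0 \<le> v" "0 \<le> v'"
  shows "Iintegrand y v \<xi> * Iintegrand y' v' \<xi> = Iintegrand (y + y') (v + v') \<xi>"
proof (cases "v = \<infinity> \<or> v' = \<infinity>")
  case True
  then have "v + v' = \<infinity>" using assms by auto
  with True show ?thesis by (cases "\<xi> = 0") (auto simp: Iintegrand_def)
next
  case False
  with assms obtain r r' where "v = ereal r" "v' = ereal r'"
    by (cases v; cases v') auto
  then show ?thesis by (simp add: Iintegrand_def exp_add[symmetric] algebra_simps)
qed

lemma Iintegrand_le_exp_abs:
  assumes "\<bar>\<xi>\<bar> \<le> 1" "0 \<le> v"
  shows "Iintegrand y v \<xi> \<le> exp \<bar>y\<bar>"
proof (cases "v = \<infinity>")
  case False
  have "\<bar>y * \<xi>\<bar> \<le> \<bar>y\<bar>"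
    using assms(1) by (simp add: abs_mult mult_left_le)
  then have "y * \<xi> \<le> \<bar>y\<bar>"
    by linarith
  moreover have "0 \<le> real_of_ereal v * \<xi>\<^sup>2"
    using assms(2) by (simp add: real_of_ereal_pos)
  ultimately show ?thesis using False by (simp add: Iintegrand_def)
qed (simp add: Iintegrand_def)

lemma Iintegrand_psiE_le:
  assumes "\<bar>\<xi>\<bar> \<le> 1" "\<bar>d\<bar> \<le> 1"
  shows "Iintegrand y (psiE \<bar>d\<bar>) \<xi> \<le> exp (\<xi> * (y - d)) * (1 + \<xi> * d)"
proof (cases "\<bar>d\<bar> < 1")
  case True
  have "Iintegrand y (psiE \<bar>d\<bar>) \<xi> = exp (\<xi> * (y - d)) * exp (\<xi> * d - psi \<bar>d\<bar> * \<xi>\<^sup>2)"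
    using True by (simp add: Iintegrand_def psiE_eq_psi exp_add[symmetric] algebra_simps)
  also have "\<dots> \<le> exp (\<xi> * (y - d)) * (1 + \<xi> * d)"
    using fan_inequality[OF assms(1) True] by simp
  finally show ?thesis .
next
  case False
  have "\<bar>\<xi> * d\<bar> \<le> 1"
    using assms by (simp add: abs_mult mult_le_one)
  then show ?thesis using False by (auto simp: Iintegrand_def psiE_def)
qed

lemma borel_measurable_Iintegrand [measurable (raw)]:
  assumes [measurable]: "y \<in> borel_measurable N" "v \<in> borel_measurable N" "\<xi> \<in> borel_measurable N"
  shows "(\<lambda>x. Iintegrand (y x) (v x) (\<xi> x)) \<in> borel_measurable N"
proof -
  have [measurable]: "Measurable.pred N (\<lambda>x. v x = \<infinity>)" by measurable
  show ?thesis unfolding Iintegrand_def by measurable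
qed

lemma borel_measurable_Iint [measurable (raw)]:
  assumes [measurable]: "y \<in> borel_measurable N" "v \<in> borel_measurable N"
  shows "(\<lambda>x. Iint (y x) (v x)) \<in> borel_measurable N"
  unfolding Iint_def set_lebesgue_integral_def
  by (rule lborel.borel_measurable_lebesgue_integral) measurable

lemma nn_integral_Iintegrand:
  assumes "0 \<le> v"
  shows "(\<integral>\<^sup>+\<xi>. ennreal (indicator {-1..1} \<xi> * Iintegrand y v \<xi>) \<partial>lborel) = ennreal (Iint y v)"
proof -
  have "integrable lborel (\<lambda>\<xi>. indicator {-1..1} \<xi> * Iintegrand y v \<xi>)"
  proof (rule integrableI_bounded_set[where A="{-1..1}" and B="exp \<bar>y\<bar>"])
    show "AE \<xi> in lborel. \<xi> \<in> {-1..1} \<longrightarrow> norm (indicator {-1..1} \<xi> * Iintegrand y v \<xi>) \<le> exp \<bar>y\<bar>"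
      using Iintegrand_le_exp_abs[OF _ assms] by (auto simp: Iintegrand_nonneg)
  qed auto
  then show ?thesis
    unfolding Iint_def set_lebesgue_integral_def
    by (subst nn_integral_eq_integral) (auto simp: Iintegrand_nonneg)
qed

lemma Iint_zero_pos:
  assumes "0 \<le> v"
  shows "0 < Iint 0 (ereal v)"
proof -
  have "ennreal (exp (- v)) * 2
      = (\<integral>\<^sup>+\<xi>. ennreal (exp (- v)) * indicator {-1..1::real} \<xi> \<partial>lborel)"
    by (subst nn_integral_cmult_indicator) auto
  also have "\<dots> \<le> ennreal (Iint 0 (ereal v))"
    unfolding nn_integral_Iintegrand[of "ereal v", symmetric, simplified, OF assms]
  proof (rule nn_integral_mono)
    fix \<xi> :: real
    have "\<xi> \<in> {-1..1} \<Longrightarrow> v * \<xi>\<^sup>2 \<le> v * 1"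
      using assms by (intro mult_left_mono) (auto simp: abs_square_le_1 abs_le_iff)
    then show "ennreal (exp (- v)) * indicator {-1..1} \<xi> \<le> ennreal (indicator {-1..1} \<xi> * Iintegrand 0 (ereal v) \<xi>)"
      by (auto simp: Iintegrand_def intro!: ennreal_leI split: split_indicator)
  qed
  finally have "ennreal (2 * exp (- v)) \<le> ennreal (Iint 0 (ereal v))"
    by (simp add: ennreal_mult' mult.commute)
  then have "2 * exp (- v) \<le> Iint 0 (ereal v)"
    by (auto simp: ennreal_le_iff2)
  then show ?thesis
    using exp_gt_zero[of "- v"] by linarith
qed

lemma Phi_mono: "a \<le> b \<Longrightarrow> Phi a \<le> Phi b"
  unfolding Phi_def
  by (intro finite_measure.finite_measure_mono prob_space.finite_measure prob_space_normal_density) auto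

lemma Phi_diff:
  assumes "a \<le> b"
  shows "ennreal (Phi b - Phi a) = (\<integral>\<^sup>+x. ennreal (indicator {a..b} x * std_normal_density x) \<partial>lborel)"
proof -
  define D where "D = density lborel std_normal_density"
  interpret D: prob_space D
    unfolding D_def by (rule prob_space_normal_density) simp
  have "Phi b - Phi a = measure D ({..b} - {..a})"
    unfolding Phi_def D_def[symmetric] using assms by (subst D.finite_measure_Diff) (auto simp: D_def)
  also have "{..b} - {..a} = {a<..b}"
    by auto
  finally have "ennreal (Phi b - Phi a) = emeasure D {a<..b}"
    by (simp add: D.emeasure_eq_measure)
  also have "\<dots> = (\<integral>\<^sup>+x. ennreal (indicator {a<..b} x * std_normal_density x) \<partial>lborel)"
    unfolding D_def
    by (subst emeasure_density) (auto intro!: nn_integral_cong split: split_indicator)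
  also have "\<dots> = (\<integral>\<^sup>+x. ennreal (indicator {a..b} x * std_normal_density x) \<partial>lborel)"
    by (rule nn_integral_cong_AE)
      (use AE_lborel_singleton[of a] in \<open>eventually_elim, auto split: split_indicator\<close>)
  finally show ?thesis .
qed

lemma Iint_zero_gaussian:
  assumes "0 < \<kappa>"
  shows "Iint 0 (ereal (1 / (2 * \<kappa>\<^sup>2))) = \<kappa> * sqrt (2 * pi) * (Phi (1 / \<kappa>) - Phi (- 1 / \<kappa>))"
proof -
  let ?g = "\<lambda>\<xi>. ennreal (indicator {-1..1} \<xi> * exp (- \<xi>\<^sup>2 / (2 * \<kappa>\<^sup>2)))"
  have "ennreal (Iint 0 (ereal (1 / (2 * \<kappa>\<^sup>2)))) = (\<integral>\<^sup>+\<xi>. ?g \<xi> \<partial>lborel)"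
    by (subst nn_integral_Iintegrand[symmetric]) (auto simp: Iintegrand_def)
  also have "\<dots> = ennreal \<kappa> * (\<integral>\<^sup>+x. ?g (0 + \<kappa> * x) \<partial>lborel)"
    using nn_integral_real_affine[of ?g \<kappa> 0] assms by simp
  also have "(\<integral>\<^sup>+x. ?g (0 + \<kappa> * x) \<partial>lborel)
      = (\<integral>\<^sup>+x. ennreal (sqrt (2 * pi)) * ennreal (indicator {- 1 / \<kappa>..1 / \<kappa>} x * std_normal_density x) \<partial>lborel)"
  proof (rule nn_integral_cong)
    fix x :: real
    have "indicator {-1..1} (\<kappa> * x) = (indicator {- 1 / \<kappa>..1 / \<kappa>} x :: real)"
      using assms by (auto simp: field_simps split: split_indicator)
    moreover have "exp (- (\<kappa> * x)\<^sup>2 / (2 * \<kappa>\<^sup>2)) = exp (- x\<^sup>2 / 2)"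
      using assms by (simp add: power_mult_distrib)
    ultimately show "?g (0 + \<kappa> * x) = ennreal (sqrt (2 * pi)) * ennreal (indicator {- 1 / \<kappa>..1 / \<kappa>} x * std_normal_density x)"
      by (simp add: std_normal_density_def ennreal_mult'[symmetric])
  qed
  also have "\<dots> = ennreal (sqrt (2 * pi)) * ennreal (Phi (1 / \<kappa>) - Phi (- 1 / \<kappa>))"
    using assms by (subst nn_integral_cmult) (auto simp: Phi_diff)
  also have "ennreal \<kappa> * (ennreal (sqrt (2 * pi)) * ennreal (Phi (1 / \<kappa>) - Phi (- 1 / \<kappa>)))
      = ennreal (\<kappa> * sqrt (2 * pi) * (Phi (1 / \<kappa>) - Phi (- 1 / \<kappa>)))"
    using assms by (simp add: ennreal_mult' ennreal_mult'' mult.assoc)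
  finally show ?thesis
    using Iint_zero_pos[of "1 / (2 * \<kappa>\<^sup>2)"] Phi_mono[of "- 1 / \<kappa>" "1 / \<kappa>"] assms
    by (subst (asm) ennreal_inj) auto
qed

section \<open>Ville's inequality\<close>

lemma (in filtration) borel_measurable_F_mono:
  "i \<le> j \<Longrightarrow> f \<in> borel_measurable (F i) \<Longrightarrow> f \<in> borel_measurable (F j)"
  by (rule measurable_from_subalg[rotated]) (use sets_F_mono in \<open>auto simp: subalgebra_def space_F\<close>)

lemma sets_F_stays_below:
  fixes F :: "nat \<Rightarrow> 'a measure" and W :: "nat \<Rightarrow> 'a \<Rightarrow> 'b::{linorder_topology, second_countable_topology}"
  assumes "filtration \<Omega> F" and adapted: "\<And>t. W t \<in> borel_measurable (F t)"
  shows "{\<omega> \<in> \<Omega>. \<forall>t\<in>{..n}. W t \<omega> < r} \<in> sets (F n)"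
proof -
  interpret filtration \<Omega> F by fact
  have "Measurable.pred (F n) (\<lambda>\<omega>. W t \<omega> < r)" if "t \<le> n" for t
    using borel_measurable_F_mono[OF that adapted] by measurable
  then have "Measurable.pred (F n) (\<lambda>\<omega>. \<forall>t\<in>{..n}. W t \<omega> < r)"
    by (intro pred_intros_finite) auto
  then show ?thesis
    by (simp add: pred_def space_F)
qed

text \<open>The invariant behind Ville's inequality: \<open>r\<close> times the measure of the event that \<open>W\<close> has
  reached \<open>r\<close> before time \<open>n\<close>, plus the integral of \<open>W n\<close> over the complementary event, is
  nonincreasing in \<open>n\<close>.\<close>

lemma ville_invariant:
  fixes F :: "nat \<Rightarrow> 'a measure" and W :: "nat \<Rightarrow> 'a \<Rightarrow> ennreal"
  assumes "filtration (space M) F" and subalg: "\<And>t. subalgebra M (F t)"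
    and adapted: "\<And>t. W t \<in> borel_measurable (F t)"
    and super: "\<And>s A. A \<in> sets (F s) \<Longrightarrow>
      (\<integral>\<^sup>+\<omega>. indicator A \<omega> * W (Suc s) \<omega> \<partial>M) \<le> (\<integral>\<^sup>+\<omega>. indicator A \<omega> * W s \<omega> \<partial>M)"
  shows "r * emeasure M (space M - {\<omega> \<in> space M. \<forall>t\<in>{..<n}. W t \<omega> < r})
      + (\<integral>\<^sup>+\<omega>. indicator {\<omega> \<in> space M. \<forall>t\<in>{..<n}. W t \<omega> < r} \<omega> * W n \<omega> \<partial>M)
    \<le> (\<integral>\<^sup>+\<omega>. W 0 \<omega> \<partial>M)"
proof -
  define R where "R n = {\<omega> \<in> space M. \<forall>t\<in>{..<n}. W t \<omega> < r}" for n
  have R_sets: "R (Suc n) \<in> sets (F n)" for n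
    unfolding R_def lessThan_Suc_atMost using assms(1) adapted by (rule sets_F_stays_below)
  have R_M [measurable]: "R n \<in> sets M" for n
  proof (cases n)
    case (Suc m)
    then show ?thesis using R_sets[of m] subalg[of m] by (auto simp: subalgebra_def)
  qed (simp add: R_def)
  have [measurable]: "W t \<in> borel_measurable M" for t
    using subalg adapted by (rule measurable_from_subalg)
  show ?thesis
    unfolding R_def[symmetric]
  proof (induction n)
    case 0
    then show ?case by (auto simp: R_def intro!: nn_integral_mono split: split_indicator)
  next
    case (Suc n)
    define E where "E = R n - R (Suc n)"
    have E_M [measurable]: "E \<in> sets M" by (simp add: E_def)
    have E_ge: "\<omega> \<in> E \<Longrightarrow> r \<le> W n \<omega>" for \<omega>
      by (force simp: E_def R_def lessThan_Suc not_less)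
    have R_Suc: "R (Suc n) \<subseteq> R n"
      by (auto simp: R_def)
    have "space M - R (Suc n) = (space M - R n) \<union> E"
      using R_Suc sets.sets_into_space[OF R_M] by (auto simp: E_def)
    then have "r * emeasure M (space M - R (Suc n)) + (\<integral>\<^sup>+\<omega>. indicator (R (Suc n)) \<omega> * W (Suc n) \<omega> \<partial>M)
        = r * emeasure M (space M - R n) + r * emeasure M E
          + (\<integral>\<^sup>+\<omega>. indicator (R (Suc n)) \<omega> * W (Suc n) \<omega> \<partial>M)"
      by (simp add: plus_emeasure[symmetric] E_def distrib_left Diff_Int_distrib2)
    also have "\<dots> \<le> r * emeasure M (space M - R n) + (\<integral>\<^sup>+\<omega>. indicator E \<omega> * W n \<omega> \<partial>M)
        + (\<integral>\<^sup>+\<omega>. indicator (R (Suc n)) \<omega> * W n \<omega> \<partial>M)"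
    proof (intro add_mono order.refl super[OF R_sets])
      show "r * emeasure M E \<le> (\<integral>\<^sup>+\<omega>. indicator E \<omega> * W n \<omega> \<partial>M)"
        using E_ge by (subst nn_integral_cmult_indicator[symmetric])
          (auto intro!: nn_integral_mono split: split_indicator)
    qed
    also have "\<dots> = r * emeasure M (space M - R n) + (\<integral>\<^sup>+\<omega>. indicator (R n) \<omega> * W n \<omega> \<partial>M)"
      using R_Suc by (subst add.assoc, subst nn_integral_add[symmetric])
        (auto simp: E_def intro!: nn_integral_cong split: split_indicator)
    finally show ?case using Suc.IH by order
  qed
qed

lemma ville_inequality:
  fixes F :: "nat \<Rightarrow> 'a measure" and W :: "nat \<Rightarrow> 'a \<Rightarrow> ennreal"
  assumes "filtration (space M) F" and subalg: "\<And>t. subalgebra M (F t)"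
    and adapted: "\<And>t. W t \<in> borel_measurable (F t)"
    and super: "\<And>s A. A \<in> sets (F s) \<Longrightarrow>
      (\<integral>\<^sup>+\<omega>. indicator A \<omega> * W (Suc s) \<omega> \<partial>M) \<le> (\<integral>\<^sup>+\<omega>. indicator A \<omega> * W s \<omega> \<partial>M)"
  shows "r * emeasure M {\<omega> \<in> space M. \<exists>t. r \<le> W t \<omega>} \<le> (\<integral>\<^sup>+\<omega>. W 0 \<omega> \<partial>M)"
proof -
  define B where "B n = space M - {\<omega> \<in> space M. \<forall>t\<in>{..<n}. W t \<omega> < r}" for n
  have [measurable]: "W t \<in> borel_measurable M" for t
    using subalg adapted by (rule measurable_from_subalg)
  have "range B \<subseteq> sets M"
    by (auto simp: B_def)
  moreover have "incseq B"
    by (force simp: incseq_def B_def)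
  moreover have "{\<omega> \<in> space M. \<exists>t. r \<le> W t \<omega>} = (\<Union>n. B n)"
    by (auto simp: B_def not_less) (meson lessI lessThan_iff leD)
  ultimately have "r * emeasure M {\<omega> \<in> space M. \<exists>t. r \<le> W t \<omega>} = (SUP n. r * emeasure M (B n))"
    by (simp add: SUP_emeasure_incseq SUP_mult_left_ennreal[symmetric])
  also have "\<dots> \<le> (\<integral>\<^sup>+\<omega>. W 0 \<omega> \<partial>M)"
  proof (rule SUP_least)
    fix n
    have "r * emeasure M (B n) \<le> r * emeasure M (B n)
        + (\<integral>\<^sup>+\<omega>. indicator {\<omega> \<in> space M. \<forall>t\<in>{..<n}. W t \<omega> < r} \<omega> * W n \<omega> \<partial>M)"
      by (rule add_increasing2) auto
    also have "\<dots> \<le> (\<integral>\<^sup>+\<omega>. W 0 \<omega> \<partial>M)"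
      unfolding B_def by (rule ville_invariant[OF assms])
    finally show "r * emeasure M (B n) \<le> (\<integral>\<^sup>+\<omega>. W 0 \<omega> \<partial>M)" .
  qed
  finally show ?thesis .
qed

section \<open>The supermartingale step\<close>

lemma (in finite_measure) integral_mult_affine_cond_mean:
  fixes G :: "'a measure" and k a Y m :: "'a \<Rightarrow> real"
  assumes G: "subalgebra M G"
    and [measurable]: "k \<in> borel_measurable G" "a \<in> borel_measurable G" "m \<in> borel_measurable G"
      "Y \<in> borel_measurable M"
    and bounds: "\<And>\<omega>. \<omega> \<in> space M \<Longrightarrow> \<bar>k \<omega>\<bar> \<le> K \<and> \<bar>a \<omega>\<bar> \<le> A \<and> \<bar>Y \<omega>\<bar> \<le> 1 \<and> \<bar>m \<omega>\<bar> \<le> 1"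
    and cond_mean: "\<And>h C. h \<in> borel_measurable G \<Longrightarrow> (\<And>\<omega>. \<omega> \<in> space M \<Longrightarrow> \<bar>h \<omega>\<bar> \<le> C) \<Longrightarrow>
      (\<integral>\<omega>. h \<omega> * m \<omega> \<partial>M) = (\<integral>\<omega>. h \<omega> * Y \<omega> \<partial>M)"
  shows "(\<integral>\<omega>. k \<omega> * (a \<omega> + c * Y \<omega>) \<partial>M) = (\<integral>\<omega>. k \<omega> * (a \<omega> + c * m \<omega>) \<partial>M)"
proof -
  have [measurable]: "k \<in> borel_measurable M" "a \<in> borel_measurable M" "m \<in> borel_measurable M"
    by (rule measurable_from_subalg[OF G], measurable)+
  have kc_bound: "\<bar>k \<omega> * c\<bar> \<le> K * \<bar>c\<bar>" if "\<omega> \<in> space M" for \<omega>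
    using bounds[OF that] by (simp add: abs_mult mult_right_mono)
  have pointwise_bounds: "\<bar>k \<omega> * a \<omega>\<bar> \<le> K * A" "\<bar>k \<omega> * c * Y \<omega>\<bar> \<le> K * \<bar>c\<bar>"
    "\<bar>k \<omega> * c * m \<omega>\<bar> \<le> K * \<bar>c\<bar>" if "\<omega> \<in> space M" for \<omega>
  proof -
    show "\<bar>k \<omega> * a \<omega>\<bar> \<le> K * A"
      using bounds[OF that] by (auto simp: abs_mult intro!: mult_mono')
    have "\<bar>k \<omega> * c * Y \<omega>\<bar> \<le> \<bar>k \<omega> * c\<bar>" "\<bar>k \<omega> * c * m \<omega>\<bar> \<le> \<bar>k \<omega> * c\<bar>"
      using bounds[OF that] by (auto simp: abs_mult[of "k \<omega> * c"] intro!: mult_right_le_one_le)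
    with kc_bound[OF that] show "\<bar>k \<omega> * c * Y \<omega>\<bar> \<le> K * \<bar>c\<bar>" "\<bar>k \<omega> * c * m \<omega>\<bar> \<le> K * \<bar>c\<bar>"
      by linarith+
  qed
  have integrable: "integrable M (\<lambda>\<omega>. k \<omega> * a \<omega>)" "integrable M (\<lambda>\<omega>. k \<omega> * c * Y \<omega>)"
    "integrable M (\<lambda>\<omega>. k \<omega> * c * m \<omega>)"
    using pointwise_bounds by (auto intro!: integrable_const_bound AE_I2)
  have "(\<integral>\<omega>. k \<omega> * (a \<omega> + c * Y \<omega>) \<partial>M) = (\<integral>\<omega>. k \<omega> * a \<omega> \<partial>M) + (\<integral>\<omega>. k \<omega> * c * Y \<omega> \<partial>M)"
    using integrable by (simp add: distrib_left mult.assoc)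
  also have "(\<integral>\<omega>. k \<omega> * c * Y \<omega> \<partial>M) = (\<integral>\<omega>. k \<omega> * c * m \<omega> \<partial>M)"
    using kc_bound by (intro cond_mean[symmetric]) auto
  also have "(\<integral>\<omega>. k \<omega> * a \<omega> \<partial>M) + (\<integral>\<omega>. k \<omega> * c * m \<omega> \<partial>M) = (\<integral>\<omega>. k \<omega> * (a \<omega> + c * m \<omega>) \<partial>M)"
    using integrable by (simp add: distrib_left mult.assoc)
  finally show ?thesis .
qed

lemma exp_neg_mult_one_plus_le_one: "exp (- x) * (1 + x) \<le> (1::real)"
  using exp_ge_add_one_self[of x] by (simp add: exp_minus field_simps)

lemma (in prob_space) integral_mult_exp_affine_le:
  fixes G :: "'a measure" and H Y m p :: "'a \<Rightarrow> real"
  assumes G: "subalgebra M G"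
    and [measurable]: "H \<in> borel_measurable G" "m \<in> borel_measurable G" "p \<in> borel_measurable G"
      "Y \<in> borel_measurable M"
    and H_bounds: "\<And>\<omega>. \<omega> \<in> space M \<Longrightarrow> 0 \<le> H \<omega> \<and> H \<omega> \<le> B"
    and ranges: "\<And>\<omega>. \<omega> \<in> space M \<Longrightarrow> Y \<omega> \<in> {0..1} \<and> m \<omega> \<in> {0..1} \<and> p \<omega> \<in> {0..1}"
    and cond_mean: "\<And>h C. h \<in> borel_measurable G \<Longrightarrow> (\<And>\<omega>. \<omega> \<in> space M \<Longrightarrow> \<bar>h \<omega>\<bar> \<le> C) \<Longrightarrow>
      (\<integral>\<omega>. h \<omega> * m \<omega> \<partial>M) = (\<integral>\<omega>. h \<omega> * Y \<omega> \<partial>M)"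
    and \<xi>: "\<bar>\<xi>\<bar> \<le> 1"
  shows "(\<integral>\<omega>. H \<omega> * exp (\<xi> * (p \<omega> - m \<omega>)) * (1 + \<xi> * (Y \<omega> - p \<omega>)) \<partial>M) \<le> (\<integral>\<omega>. H \<omega> \<partial>M)"
proof -
  have [measurable]: "H \<in> borel_measurable M" "m \<in> borel_measurable M" "p \<in> borel_measurable M"
    by (rule measurable_from_subalg[OF G], measurable)+
  define k where "k \<omega> = H \<omega> * exp (\<xi> * (p \<omega> - m \<omega>))" for \<omega>
  have [measurable]: "k \<in> borel_measurable G" "k \<in> borel_measurable M"
    unfolding k_def by measurable
  have bounds: "0 \<le> k \<omega>" "k \<omega> \<le> B * exp 1" "\<bar>1 - \<xi> * p \<omega>\<bar> \<le> 2" "\<bar>1 + \<xi> * (m \<omega> - p \<omega>)\<bar> \<le> 2"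
    if "\<omega> \<in> space M" for \<omega>
  proof -
    have "\<bar>\<xi> * (p \<omega> - m \<omega>)\<bar> \<le> 1" "\<bar>\<xi> * p \<omega>\<bar> \<le> 1"
      using \<xi> ranges[OF that] by (auto simp: abs_mult intro!: mult_le_one)
    then show "0 \<le> k \<omega>" "k \<omega> \<le> B * exp 1" "\<bar>1 - \<xi> * p \<omega>\<bar> \<le> 2" "\<bar>1 + \<xi> * (m \<omega> - p \<omega>)\<bar> \<le> 2"
      using H_bounds[OF that] by (auto simp: k_def abs_le_iff algebra_simps intro!: mult_mono)
  qed
  have "(\<integral>\<omega>. k \<omega> * ((1 - \<xi> * p \<omega>) + \<xi> * Y \<omega>) \<partial>M) = (\<integral>\<omega>. k \<omega> * ((1 - \<xi> * p \<omega>) + \<xi> * m \<omega>) \<partial>M)"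
    using G _ _ _ _ _ cond_mean
  proof (rule integral_mult_affine_cond_mean[where K="B * exp 1" and A=2])
    show "\<bar>k \<omega>\<bar> \<le> B * exp 1 \<and> \<bar>1 - \<xi> * p \<omega>\<bar> \<le> 2 \<and> \<bar>Y \<omega>\<bar> \<le> 1 \<and> \<bar>m \<omega>\<bar> \<le> 1"
      if "\<omega> \<in> space M" for \<omega>
      using bounds[OF that] ranges[OF that] by auto
  qed measurable
  then have "(\<integral>\<omega>. k \<omega> * (1 + \<xi> * (Y \<omega> - p \<omega>)) \<partial>M) = (\<integral>\<omega>. k \<omega> * (1 + \<xi> * (m \<omega> - p \<omega>)) \<partial>M)"
    by (simp add: algebra_simps)
  also have "\<dots> \<le> (\<integral>\<omega>. H \<omega> \<partial>M)"
  proof (rule integral_mono)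
    show "integrable M (\<lambda>\<omega>. k \<omega> * (1 + \<xi> * (m \<omega> - p \<omega>)))"
      using bounds by (intro integrable_const_bound[where B="B * exp 1 * 2"] AE_I2)
        (auto simp: abs_mult intro!: mult_mono')
    show "integrable M H"
      using H_bounds by (intro integrable_const_bound[where B=B] AE_I2) auto
    fix \<omega> assume "\<omega> \<in> space M"
    then show "k \<omega> * (1 + \<xi> * (m \<omega> - p \<omega>)) \<le> H \<omega>"
      using exp_neg_mult_one_plus_le_one[of "\<xi> * (m \<omega> - p \<omega>)"] H_bounds mult_left_mono
      by (fastforce simp: k_def algebra_simps)
  qed
  finally show ?thesis
    by (simp add: k_def)
qed

lemma (in prob_space) nn_integral_mult_Iintegrand_le:
  fixes G :: "'a measure" and H Y m p :: "'a \<Rightarrow> real"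
  assumes G: "subalgebra M G"
    and [measurable]: "H \<in> borel_measurable G" "m \<in> borel_measurable G" "p \<in> borel_measurable G"
      "Y \<in> borel_measurable M"
    and H_bounds: "\<And>\<omega>. \<omega> \<in> space M \<Longrightarrow> 0 \<le> H \<omega> \<and> H \<omega> \<le> B"
    and ranges: "\<And>\<omega>. \<omega> \<in> space M \<Longrightarrow> Y \<omega> \<in> {0..1} \<and> m \<omega> \<in> {0..1} \<and> p \<omega> \<in> {0..1}"
    and cond_mean: "\<And>h C. h \<in> borel_measurable G \<Longrightarrow> (\<And>\<omega>. \<omega> \<in> space M \<Longrightarrow> \<bar>h \<omega>\<bar> \<le> C) \<Longrightarrow>
      (\<integral>\<omega>. h \<omega> * m \<omega> \<partial>M) = (\<integral>\<omega>. h \<omega> * Y \<omega> \<partial>M)"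
    and \<xi>: "\<bar>\<xi>\<bar> \<le> 1"
  shows "(\<integral>\<^sup>+\<omega>. ennreal (H \<omega> * Iintegrand (Y \<omega> - m \<omega>) (psiE \<bar>Y \<omega> - p \<omega>\<bar>) \<xi>) \<partial>M)
    \<le> (\<integral>\<^sup>+\<omega>. ennreal (H \<omega>) \<partial>M)"
proof -
  have [measurable]: "H \<in> borel_measurable M" "m \<in> borel_measurable M" "p \<in> borel_measurable M"
    by (rule measurable_from_subalg[OF G], measurable)+
  define f where "f \<omega> = H \<omega> * exp (\<xi> * (p \<omega> - m \<omega>)) * (1 + \<xi> * (Y \<omega> - p \<omega>))" for \<omega>
  have f_bounds: "0 \<le> f \<omega> \<and> f \<omega> \<le> B * exp 1 * 2" if "\<omega> \<in> space M" for \<omega>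
  proof -
    have "\<bar>\<xi> * (p \<omega> - m \<omega>)\<bar> \<le> 1" "\<bar>\<xi> * (Y \<omega> - p \<omega>)\<bar> \<le> 1"
      using \<xi> ranges[OF that] by (auto simp: abs_mult intro!: mult_le_one)
    then show ?thesis
      using H_bounds[OF that] by (auto simp: f_def abs_le_iff intro!: mult_mono)
  qed
  have "(\<integral>\<^sup>+\<omega>. ennreal (H \<omega> * Iintegrand (Y \<omega> - m \<omega>) (psiE \<bar>Y \<omega> - p \<omega>\<bar>) \<xi>) \<partial>M)
      \<le> (\<integral>\<^sup>+\<omega>. ennreal (f \<omega>) \<partial>M)"
  proof (intro nn_integral_mono ennreal_leI)
    fix \<omega> assume \<omega>: "\<omega> \<in> space M"
    have "Iintegrand (Y \<omega> - m \<omega>) (psiE \<bar>Y \<omega> - p \<omega>\<bar>) \<xi>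
        \<le> exp (\<xi> * (p \<omega> - m \<omega>)) * (1 + \<xi> * (Y \<omega> - p \<omega>))"
      using Iintegrand_psiE_le[OF \<xi>, of "Y \<omega> - p \<omega>" "Y \<omega> - m \<omega>"] ranges[OF \<omega>] by auto
    then show "H \<omega> * Iintegrand (Y \<omega> - m \<omega>) (psiE \<bar>Y \<omega> - p \<omega>\<bar>) \<xi> \<le> f \<omega>"
      using H_bounds[OF \<omega>] by (auto simp: f_def mult.assoc intro: mult_left_mono)
  qed
  also have "\<dots> = ennreal (\<integral>\<omega>. f \<omega> \<partial>M)"
    using f_bounds
    by (intro nn_integral_eq_integral integrable_const_bound[where B="B * exp 1 * 2"] AE_I2)
      (auto simp: f_def)
  also have "\<dots> \<le> ennreal (\<integral>\<omega>. H \<omega> \<partial>M)"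
    unfolding f_def by (intro ennreal_leI integral_mult_exp_affine_le[OF assms])
  also have "\<dots> = (\<integral>\<^sup>+\<omega>. ennreal (H \<omega>) \<partial>M)"
    using H_bounds by (intro nn_integral_eq_integral[symmetric] integrable_const_bound[where B=B] AE_I2) auto
  finally show ?thesis .
qed

lemma (in prob_space) AE_real_cond_exp_unit_interval:
  assumes "subalgebra M G" "Y \<in> borel_measurable M" "\<And>\<omega>. \<omega> \<in> space M \<Longrightarrow> 0 \<le> Y \<omega> \<and> Y \<omega> \<le> 1"
  shows "AE \<omega> in M. 0 \<le> real_cond_exp M G Y \<omega> \<and> real_cond_exp M G Y \<omega> \<le> 1"
proof -
  interpret finite_measure_subalgebra M G
    by unfold_locales fact
  have "integrable M Y"
    using assms by (intro integrable_const_bound[where B=1] AE_I2) auto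
  then have "AE \<omega> in M. real_cond_exp M G Y \<omega> \<le> real_cond_exp M G (\<lambda>_. 1) \<omega>"
    using assms by (intro real_cond_exp_mono AE_I2) auto
  moreover have "AE \<omega> in M. real_cond_exp M G (\<lambda>_. 1) \<omega> = 1"
    by (rule real_cond_exp_F_meas) auto
  moreover have "AE \<omega> in M. 0 \<le> real_cond_exp M G Y \<omega>"
    using assms by (intro real_cond_exp_pos AE_I2) auto
  ultimately show ?thesis by eventually_elim auto
qed

lemma (in prob_space) integral_mult_clipped_real_cond_exp:
  assumes G: "subalgebra M G" and [measurable]: "Y \<in> borel_measurable M" "h \<in> borel_measurable G"
    and Y: "\<And>\<omega>. \<omega> \<in> space M \<Longrightarrow> 0 \<le> Y \<omega> \<and> Y \<omega> \<le> 1"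
    and h: "\<And>\<omega>. \<omega> \<in> space M \<Longrightarrow> \<bar>h \<omega>\<bar> \<le> C"
  shows "(\<integral>\<omega>. h \<omega> * max 0 (min 1 (real_cond_exp M G Y \<omega>)) \<partial>M) = (\<integral>\<omega>. h \<omega> * Y \<omega> \<partial>M)"
proof -
  interpret finite_measure_subalgebra M G
    by unfold_locales fact
  have [measurable]: "h \<in> borel_measurable M"
    by (rule measurable_from_subalg[OF G]) measurable
  have "(\<integral>\<omega>. h \<omega> * max 0 (min 1 (real_cond_exp M G Y \<omega>)) \<partial>M) = (\<integral>\<omega>. h \<omega> * real_cond_exp M G Y \<omega> \<partial>M)"
  proof (rule integral_cong_AE)
    show "AE \<omega> in M. h \<omega> * max 0 (min 1 (real_cond_exp M G Y \<omega>)) = h \<omega> * real_cond_exp M G Y \<omega>"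
      using AE_real_cond_exp_unit_interval[OF G assms(2) Y] by (rule eventually_mono) auto
  qed measurable
  also have "\<dots> = (\<integral>\<omega>. h \<omega> * Y \<omega> \<partial>M)"
  proof (rule real_cond_exp_intg(2))
    show "integrable M (\<lambda>\<omega>. h \<omega> * Y \<omega>)"
      using h Y by (intro integrable_const_bound[where B=C] AE_I2)
        (auto simp: abs_mult intro: mult_le_one order_trans[OF mult_right_le_one_le])
  qed measurable
  finally show ?thesis .
qed

section \<open>The mixture supermartingale of a bounded process\<close>

locale bounded_process_with_prediction = prob_space M for M :: "'a measure" +
  fixes X Xhat :: "nat \<Rightarrow> 'a \<Rightarrow> real" and v\<^sub>0 :: real
  assumes X_measurable: "\<And>t. 1 \<le> t \<Longrightarrow> X t \<in> borel_measurable M"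
    and X_range: "\<And>t \<omega>. 1 \<le> t \<Longrightarrow> \<omega> \<in> space M \<Longrightarrow> 0 \<le> X t \<omega> \<and> X t \<omega> \<le> 1"
    and Xhat_predictable: "\<And>t. 1 \<le> t \<Longrightarrow> Xhat t \<in> borel_measurable (natfilt M X (t - 1))"
    and Xhat_range: "\<And>t \<omega>. 1 \<le> t \<Longrightarrow> \<omega> \<in> space M \<Longrightarrow> 0 \<le> Xhat t \<omega> \<and> Xhat t \<omega> \<le> 1"
    and v\<^sub>0_nonneg: "0 \<le> v\<^sub>0"
begin

abbreviation F :: "nat \<Rightarrow> 'a measure" where
  "F \<equiv> natfilt M X"

lemma
  shows space_F [simp]: "space (F t) = space M"
    and sets_F: "sets (F t) = sigma_sets (space M) {X i -` B \<inter> space M | i B. i \<in> {1..t} \<and> B \<in> sets borel}"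
  unfolding natfilt_def by (auto simp: space_measure_of_conv sets_measure_of_conv)

lemma sets_F_subset: "sets (F t) \<subseteq> sets M"
  unfolding sets_F using X_measurable by (intro sets.sigma_sets_subset) (auto simp: measurable_sets)

lemma subalgebra_F: "subalgebra M (F t)"
  using sets_F_subset by (simp add: subalgebra_def)

lemma filtration_F: "filtration (space M) F"
  by unfold_locales (auto simp: sets_F intro!: sigma_sets_mono', fastforce)

lemmas measurable_F_mono = filtration.borel_measurable_F_mono[OF filtration_F]

lemma measurable_F_M: "f \<in> borel_measurable (F t) \<Longrightarrow> f \<in> borel_measurable M"
  by (rule measurable_from_subalg[OF subalgebra_F])

lemma X_measurable_F:
  assumes "1 \<le> i" "i \<le> t"
  shows "X i \<in> borel_measurable (F t)"
proof (rule measurableI)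
  fix B :: "real set" assume "B \<in> sets borel"
  then show "X i -` B \<inter> space (F t) \<in> sets (F t)"
    using assms unfolding sets_F by auto
qed simp

text \<open>Clipping to \<open>[0, 1]\<close> makes the bounds on the conditional mean hold everywhere rather
  than almost everywhere.\<close>

definition cmean :: "nat \<Rightarrow> 'a \<Rightarrow> real" where
  "cmean i \<omega> = max 0 (min 1 (real_cond_exp M (F (i - 1)) (X i) \<omega>))"

definition centred_sum :: "nat \<Rightarrow> 'a \<Rightarrow> real" where
  "centred_sum t \<omega> = (\<Sum>i\<in>{1..t}. X i \<omega> - cmean i \<omega>)"

definition variance_proxy :: "nat \<Rightarrow> 'a \<Rightarrow> ereal" where
  "variance_proxy t \<omega> = ereal v\<^sub>0 + (\<Sum>i\<in>{1..t}. psiE \<bar>X i \<omega> - Xhat i \<omega>\<bar>)"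

definition mixture :: "nat \<Rightarrow> 'a \<Rightarrow> ennreal" where
  "mixture t \<omega> = (\<integral>\<^sup>+\<xi>. ennreal (indicator {-1..1} \<xi> * Iintegrand (centred_sum t \<omega>) (variance_proxy t \<omega>) \<xi>) \<partial>lborel)"

lemma cmean_measurable [measurable]: "cmean i \<in> borel_measurable (F (i - 1))"
  unfolding cmean_def by measurable

lemma cmean_range: "0 \<le> cmean i \<omega> \<and> cmean i \<omega> \<le> 1"
  by (simp add: cmean_def)

lemma integral_mult_cmean:
  assumes "1 \<le> i" "h \<in> borel_measurable (F (i - 1))" "\<And>\<omega>. \<omega> \<in> space M \<Longrightarrow> \<bar>h \<omega>\<bar> \<le> C"
  shows "(\<integral>\<omega>. h \<omega> * cmean i \<omega> \<partial>M) = (\<integral>\<omega>. h \<omega> * X i \<omega> \<partial>M)"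
  unfolding cmean_def
  using assms X_measurable X_range by (intro integral_mult_clipped_real_cond_exp subalgebra_F) auto

lemma variance_proxy_nonneg: "0 \<le> variance_proxy t \<omega>"
  unfolding variance_proxy_def using v\<^sub>0_nonneg by (intro add_nonneg_nonneg sum_nonneg psiE_nonneg) auto

lemma centred_sum_variance_proxy_measurable:
  shows "centred_sum t \<in> borel_measurable (F t)" and "variance_proxy t \<in> borel_measurable (F t)"
proof -
  have [measurable]: "X i \<in> borel_measurable (F t)" "Xhat i \<in> borel_measurable (F t)"
    "cmean i \<in> borel_measurable (F t)" if "i \<in> {1..t}" for i
    using that X_measurable_F measurable_F_mono[OF _ Xhat_predictable] measurable_F_mono[OF _ cmean_measurable]
    by auto
  show "centred_sum t \<in> borel_measurable (F t)"
    unfolding centred_sum_def by measurable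
  show "variance_proxy t \<in> borel_measurable (F t)"
    unfolding variance_proxy_def psiE_def by measurable
qed

lemma mixture_eq_Iint: "mixture t \<omega> = ennreal (Iint (centred_sum t \<omega>) (variance_proxy t \<omega>))"
  unfolding mixture_def using variance_proxy_nonneg by (rule nn_integral_Iintegrand)

lemma mixture_measurable: "mixture t \<in> borel_measurable (F t)"
  using centred_sum_variance_proxy_measurable[of t] unfolding mixture_eq_Iint[abs_def] by measurable

lemma mixture_zero: "mixture 0 \<omega> = ennreal (Iint 0 (ereal v\<^sub>0))"
  by (simp add: mixture_eq_Iint centred_sum_def variance_proxy_def)

lemma abs_centred_sum_le:
  assumes "\<omega> \<in> space M"
  shows "\<bar>centred_sum t \<omega>\<bar> \<le> t"
proof -
  have "\<bar>centred_sum t \<omega>\<bar> \<le> (\<Sum>i\<in>{1..t}. \<bar>X i \<omega> - cmean i \<omega>\<bar>)"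
    unfolding centred_sum_def by (rule sum_abs)
  also have "\<dots> \<le> (\<Sum>i\<in>{1..t}. 1)"
  proof (rule sum_mono)
    fix i assume "i \<in> {1..t}"
    then show "\<bar>X i \<omega> - cmean i \<omega>\<bar> \<le> 1"
      using X_range[of i \<omega>] assms cmean_range[of i \<omega>] by (auto simp: abs_le_iff)
  qed
  finally show ?thesis by simp
qed

lemma Iintegrand_centred_sum_Suc:
  "Iintegrand (centred_sum (Suc s) \<omega>) (variance_proxy (Suc s) \<omega>) \<xi>
    = Iintegrand (centred_sum s \<omega>) (variance_proxy s \<omega>) \<xi>
      * Iintegrand (X (Suc s) \<omega> - cmean (Suc s) \<omega>) (psiE \<bar>X (Suc s) \<omega> - Xhat (Suc s) \<omega>\<bar>) \<xi>"
proof -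
  have "centred_sum (Suc s) \<omega> = centred_sum s \<omega> + (X (Suc s) \<omega> - cmean (Suc s) \<omega>)"
    and "variance_proxy (Suc s) \<omega> = variance_proxy s \<omega> + psiE \<bar>X (Suc s) \<omega> - Xhat (Suc s) \<omega>\<bar>"
    by (simp_all add: centred_sum_def variance_proxy_def sum.cl_ivl_Suc add.assoc)
  then show ?thesis
    by (simp add: Iintegrand_mult variance_proxy_nonneg psiE_nonneg)
qed

lemma nn_integral_Iintegrand_Suc_le:
  assumes \<xi>: "\<bar>\<xi>\<bar> \<le> 1" and A [measurable]: "A \<in> sets (F s)"
  shows "(\<integral>\<^sup>+\<omega>. ennreal (indicator A \<omega> * Iintegrand (centred_sum (Suc s) \<omega>) (variance_proxy (Suc s) \<omega>) \<xi>) \<partial>M)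
    \<le> (\<integral>\<^sup>+\<omega>. ennreal (indicator A \<omega> * Iintegrand (centred_sum s \<omega>) (variance_proxy s \<omega>) \<xi>) \<partial>M)"
    (is "_ \<le> (\<integral>\<^sup>+\<omega>. ennreal (?H \<omega>) \<partial>M)")
proof -
  note [measurable] = centred_sum_variance_proxy_measurable[of s]
    cmean_measurable[of "Suc s", simplified] Xhat_predictable[of "Suc s", simplified]
  have "(\<integral>\<^sup>+\<omega>. ennreal (indicator A \<omega> * Iintegrand (centred_sum (Suc s) \<omega>) (variance_proxy (Suc s) \<omega>) \<xi>) \<partial>M)
      = (\<integral>\<^sup>+\<omega>. ennreal (?H \<omega> * Iintegrand (X (Suc s) \<omega> - cmean (Suc s) \<omega>)
          (psiE \<bar>X (Suc s) \<omega> - Xhat (Suc s) \<omega>\<bar>) \<xi>) \<partial>M)"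
    by (simp add: Iintegrand_centred_sum_Suc mult.assoc)
  also have "\<dots> \<le> (\<integral>\<^sup>+\<omega>. ennreal (?H \<omega>) \<partial>M)"
  proof (rule nn_integral_mult_Iintegrand_le[OF subalgebra_F _ _ _ _ _ _ _ \<xi>])
    show "?H \<in> borel_measurable (F s)"
      by measurable
    show "X (Suc s) \<in> borel_measurable M"
      by (rule X_measurable) simp
    show "0 \<le> ?H \<omega> \<and> ?H \<omega> \<le> exp s" if "\<omega> \<in> space M" for \<omega>
    proof -
      have "Iintegrand (centred_sum s \<omega>) (variance_proxy s \<omega>) \<xi> \<le> exp \<bar>centred_sum s \<omega>\<bar>"
        using \<xi> variance_proxy_nonneg by (rule Iintegrand_le_exp_abs)
      also have "\<dots> \<le> exp s"
        using abs_centred_sum_le[OF that] by simp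
      finally show ?thesis
        by (simp add: Iintegrand_nonneg split: split_indicator)
    qed
    show "X (Suc s) \<omega> \<in> {0..1} \<and> cmean (Suc s) \<omega> \<in> {0..1} \<and> Xhat (Suc s) \<omega> \<in> {0..1}"
      if "\<omega> \<in> space M" for \<omega>
      using X_range[OF _ that] Xhat_range[OF _ that] cmean_range by auto
    show "(\<integral>\<omega>. h \<omega> * cmean (Suc s) \<omega> \<partial>M) = (\<integral>\<omega>. h \<omega> * X (Suc s) \<omega> \<partial>M)"
      if "h \<in> borel_measurable (F s)" "\<And>\<omega>. \<omega> \<in> space M \<Longrightarrow> \<bar>h \<omega>\<bar> \<le> C" for h C
      using that by (intro integral_mult_cmean) auto
  qed measurable
  finally show ?thesis .
qed

lemma mixture_supermartingale:
  assumes A [measurable]: "A \<in> sets (F s)"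
  shows "(\<integral>\<^sup>+\<omega>. indicator A \<omega> * mixture (Suc s) \<omega> \<partial>M) \<le> (\<integral>\<^sup>+\<omega>. indicator A \<omega> * mixture s \<omega> \<partial>M)"
proof -
  interpret pair_sigma_finite M lborel ..
  have [measurable]: "A \<in> sets M"
    using sets_F_subset A by blast
  define G where "G t \<omega> \<xi> = indicator {-1..1} \<xi> * ennreal (indicator A \<omega> * Iintegrand (centred_sum t \<omega>) (variance_proxy t \<omega>) \<xi>)"
    for t \<omega> and \<xi> :: real
  have G_measurable: "case_prod (G t) \<in> borel_measurable (M \<Otimes>\<^sub>M lborel)" for t
    using measurable_F_M[OF centred_sum_variance_proxy_measurable(1)[of t]]
      measurable_F_M[OF centred_sum_variance_proxy_measurable(2)[of t]]
    unfolding G_def by measurable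
  have mixture_eq: "indicator A \<omega> * mixture t \<omega> = (\<integral>\<^sup>+\<xi>. G t \<omega> \<xi> \<partial>lborel)" for t \<omega>
    unfolding mixture_def G_def by (cases "\<omega> \<in> A") (auto intro!: nn_integral_cong split: split_indicator)
  have "(\<integral>\<^sup>+\<omega>. indicator A \<omega> * mixture (Suc s) \<omega> \<partial>M) = (\<integral>\<^sup>+\<xi>. \<integral>\<^sup>+\<omega>. G (Suc s) \<omega> \<xi> \<partial>M \<partial>lborel)"
    unfolding mixture_eq by (rule Fubini'[symmetric, OF G_measurable])
  also have "\<dots> \<le> (\<integral>\<^sup>+\<xi>. \<integral>\<^sup>+\<omega>. G s \<omega> \<xi> \<partial>M \<partial>lborel)"
  proof (rule nn_integral_mono)
    fix \<xi> :: real
    have [measurable]: "(\<lambda>\<omega>. ennreal (indicator A \<omega> * Iintegrand (centred_sum t \<omega>) (variance_proxy t \<omega>) \<xi>))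
        \<in> borel_measurable M" for t
      using measurable_F_M[OF centred_sum_variance_proxy_measurable(1)[of t]]
        measurable_F_M[OF centred_sum_variance_proxy_measurable(2)[of t]] by measurable
    show "(\<integral>\<^sup>+\<omega>. G (Suc s) \<omega> \<xi> \<partial>M) \<le> (\<integral>\<^sup>+\<omega>. G s \<omega> \<xi> \<partial>M)"
    proof (cases "\<xi> \<in> {-1..1}")
      case True
      then show ?thesis
        using nn_integral_Iintegrand_Suc_le[OF _ A, of \<xi>] by (simp add: G_def abs_le_iff)
    qed (simp add: G_def)
  qed
  also have "\<dots> = (\<integral>\<^sup>+\<omega>. indicator A \<omega> * mixture s \<omega> \<partial>M)"
    unfolding mixture_eq by (rule Fubini'[OF G_measurable])
  finally show ?thesis .
qed

lemma AE_centred_sum_eq: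
  "AE \<omega> in M. \<forall>t. centred_sum t \<omega> = (\<Sum>i\<in>{1..t}. X i \<omega>) - real t * avg_cond_mean M X t \<omega>"
proof -
  have times_avg: "real t * avg_cond_mean M X t \<omega> = (\<Sum>i\<in>{1..t}. real_cond_exp M (F (i - 1)) (X i) \<omega>)"
    for t \<omega>
    by (cases "t = 0") (simp_all add: avg_cond_mean_def)
  have "AE \<omega> in M. \<forall>i. 1 \<le> i \<longrightarrow> cmean i \<omega> = real_cond_exp M (F (i - 1)) (X i) \<omega>"
  proof (subst AE_all_countable, intro allI)
    fix i :: nat
    show "AE \<omega> in M. 1 \<le> i \<longrightarrow> cmean i \<omega> = real_cond_exp M (F (i - 1)) (X i) \<omega>"
    proof (cases "1 \<le> i")
      case True
      have "AE \<omega> in M. 0 \<le> real_cond_exp M (F (i - 1)) (X i) \<omega> \<and> real_cond_exp M (F (i - 1)) (X i) \<omega> \<le> 1"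
        using X_measurable[OF True] X_range[OF True] by (rule AE_real_cond_exp_unit_interval[OF subalgebra_F])
      then show ?thesis
        by (rule eventually_mono) (simp add: cmean_def)
    qed simp
  qed
  then show ?thesis
    by (rule eventually_mono) (simp add: centred_sum_def sum_subtractf times_avg)
qed

lemma avg_cond_mean_measurable [measurable]: "avg_cond_mean M X t \<in> borel_measurable M"
  unfolding avg_cond_mean_def by measurable

lemma Iint_statistic_measurable:
  assumes [measurable]: "m \<in> borel_measurable M"
  shows "(\<lambda>\<omega>. Iint ((\<Sum>i\<in>{1..t}. X i \<omega>) - real t * m \<omega>) (variance_proxy t \<omega>)) \<in> borel_measurable M"
proof -
  have [measurable]: "(\<lambda>\<omega>. \<Sum>i\<in>{1..t}. X i \<omega>) \<in> borel_measurable M"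
    using X_measurable by auto
  have [measurable]: "variance_proxy t \<in> borel_measurable M"
    using centred_sum_variance_proxy_measurable(2) by (rule measurable_F_M)
  show ?thesis by measurable
qed

lemma prob_Iint_avg_cond_mean_below:
  assumes "0 < r"
  shows "1 - Iint 0 (ereal v\<^sub>0) / r \<le> measure M {\<omega> \<in> space M. \<forall>t\<ge>1.
    Iint ((\<Sum>i\<in>{1..t}. X i \<omega>) - real t * avg_cond_mean M X t \<omega>) (variance_proxy t \<omega>) < r}"
    (is "_ \<le> measure M ?good")
proof -
  define exceed where "exceed = {\<omega> \<in> space M. \<exists>t. ennreal r \<le> mixture t \<omega>}"
  have [measurable]: "mixture t \<in> borel_measurable M" for t
    using mixture_measurable by (rule measurable_F_M)
  have "ennreal r * emeasure M exceed \<le> (\<integral>\<^sup>+\<omega>. mixture 0 \<omega> \<partial>M)"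
    unfolding exceed_def
    using filtration_F subalgebra_F mixture_measurable mixture_supermartingale by (rule ville_inequality)
  also have "\<dots> = ennreal (Iint 0 (ereal v\<^sub>0))"
    by (simp add: mixture_zero emeasure_space_1)
  finally have "r * measure M exceed \<le> Iint 0 (ereal v\<^sub>0)"
    using assms Iint_zero_pos[OF v\<^sub>0_nonneg]
    by (simp add: emeasure_eq_measure ennreal_mult'[symmetric] ennreal_le_iff)
  then have exceed_le: "measure M exceed \<le> Iint 0 (ereal v\<^sub>0) / r"
    using assms by (simp add: field_simps)
  have "AE \<omega> in M. \<omega> \<in> space M - exceed \<longrightarrow> \<omega> \<in> ?good"
    using AE_centred_sum_eq
  proof (rule eventually_mono, safe)
    fix \<omega> and t :: nat assume "\<omega> \<in> space M" "\<omega> \<notin> exceed" "1 \<le> t"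
      and "\<forall>t. centred_sum t \<omega> = (\<Sum>i\<in>{1..t}. X i \<omega>) - real t * avg_cond_mean M X t \<omega>"
    then have "ennreal (Iint ((\<Sum>i\<in>{1..t}. X i \<omega>) - real t * avg_cond_mean M X t \<omega>) (variance_proxy t \<omega>))
        < ennreal r"
      by (auto simp: exceed_def mixture_eq_Iint not_le)
    then show "Iint ((\<Sum>i\<in>{1..t}. X i \<omega>) - real t * avg_cond_mean M X t \<omega>) (variance_proxy t \<omega>) < r"
      by (meson ennreal_leI not_le)
  qed
  moreover have "?good \<in> sets M"
    using Iint_statistic_measurable[OF avg_cond_mean_measurable] by measurable
  ultimately have "measure M (space M - exceed) \<le> measure M ?good"
    by (rule finite_measure_mono_AE)
  moreover have "measure M (space M - exceed) = 1 - measure M exceed"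
    by (rule prob_compl) (simp add: exceed_def)
  ultimately show ?thesis
    using exceed_le by simp
qed

lemma prob_Iint_const_mean_below:
  assumes "0 < r" and const: "AE \<omega> in M. \<forall>t\<ge>1. avg_cond_mean M X t \<omega> = \<mu>"
  shows "1 - Iint 0 (ereal v\<^sub>0) / r \<le> measure M {\<omega> \<in> space M. \<forall>t\<ge>1.
    Iint ((\<Sum>i\<in>{1..t}. X i \<omega>) - real t * \<mu>) (variance_proxy t \<omega>) < r}"
proof -
  have "measure M {\<omega> \<in> space M. \<forall>t\<ge>1.
      Iint ((\<Sum>i\<in>{1..t}. X i \<omega>) - real t * avg_cond_mean M X t \<omega>) (variance_proxy t \<omega>) < r}
    \<le> measure M {\<omega> \<in> space M. \<forall>t\<ge>1.
      Iint ((\<Sum>i\<in>{1..t}. X i \<omega>) - real t * \<mu>) (variance_proxy t \<omega>) < r}"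
  proof (rule finite_measure_mono_AE)
    show "{\<omega> \<in> space M. \<forall>t\<ge>1. Iint ((\<Sum>i\<in>{1..t}. X i \<omega>) - real t * \<mu>) (variance_proxy t \<omega>) < r}
        \<in> sets M"
      using Iint_statistic_measurable[of "\<lambda>_. \<mu>"] by measurable
  qed (use const in \<open>rule eventually_mono, auto\<close>)
  with prob_Iint_avg_cond_mean_below[OF assms(1)] show ?thesis
    by linarith
qed

end

theorem mainTheorem3:
  fixes M :: "'a measure" and X Xhat :: "nat \<Rightarrow> 'a \<Rightarrow> real"
    and \<kappa> \<alpha> \<mu> :: real
  assumes "prob_space M"
    and X_meas: "\<And>t. t \<ge> 1 \<Longrightarrow> X t \<in> borel_measurable M"
    and X_range: "\<And>t \<omega>. t \<ge> 1 \<Longrightarrow> \<omega> \<in> space M \<Longrightarrow> 0 \<le> X t \<omega> \<and> X t \<omega> \<le> 1"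
    and Xhat_pred: "\<And>t. t \<ge> 1 \<Longrightarrow> Xhat t \<in> borel_measurable (natfilt M X (t - 1))"
    and Xhat_range: "\<And>t \<omega>. t \<ge> 1 \<Longrightarrow> \<omega> \<in> space M \<Longrightarrow> 0 \<le> Xhat t \<omega> \<and> Xhat t \<omega> < 1"
    and "\<kappa> > 0" and "0 < \<alpha>" and "\<alpha> < 1"
  defines "Cmix \<equiv> (\<lambda>t \<omega>. {m :: real.
      Iint ((\<Sum>i\<in>{1..t}. X i \<omega>) - real t * m)
           (ereal (1 / (2 * \<kappa>\<^sup>2)) + (\<Sum>i\<in>{1..t}. psiE \<bar>X i \<omega> - Xhat i \<omega>\<bar>))
      < \<kappa> * (Phi (1 / \<kappa>) - Phi (- 1 / \<kappa>)) * sqrt (2 * pi) / \<alpha>})"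
  shows "measure M {\<omega> \<in> space M. \<forall>t\<ge>1. avg_cond_mean M X t \<omega> \<in> Cmix t \<omega>} \<ge> 1 - \<alpha>
         \<and> ((AE \<omega> in M. \<forall>t\<ge>1. avg_cond_mean M X t \<omega> = \<mu>) \<longrightarrow>
             measure M {\<omega> \<in> space M. \<forall>t\<ge>1. \<mu> \<in> (\<Inter>j\<in>{1..t}. Cmix j \<omega>)} \<ge> 1 - \<alpha>)"
proof -
  interpret bounded_process_with_prediction M X Xhat "1 / (2 * \<kappa>\<^sup>2)"
  proof (intro bounded_process_with_prediction.intro bounded_process_with_prediction_axioms.intro)
    show "\<And>t \<omega>. 1 \<le> t \<Longrightarrow> \<omega> \<in> space M \<Longrightarrow> 0 \<le> Xhat t \<omega> \<and> Xhat t \<omega> \<le> 1"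
      using Xhat_range by (simp add: less_imp_le)
  qed (fact assms(1) X_meas X_range Xhat_pred | simp)+
  define K where "K = \<kappa> * (Phi (1 / \<kappa>) - Phi (- 1 / \<kappa>)) * sqrt (2 * pi) / \<alpha>"
  have I0: "Iint 0 (ereal (1 / (2 * \<kappa>\<^sup>2))) = \<alpha> * K"
    using Iint_zero_gaussian[OF \<open>\<kappa> > 0\<close>] \<open>0 < \<alpha>\<close> by (simp add: K_def)
  have "0 < K"
    using Iint_zero_pos[of "1 / (2 * \<kappa>\<^sup>2)"] \<open>0 < \<alpha>\<close> by (simp add: I0 zero_less_mult_iff)
  have Cmix_iff: "m \<in> Cmix t \<omega> \<longleftrightarrow> Iint ((\<Sum>i\<in>{1..t}. X i \<omega>) - real t * m) (variance_proxy t \<omega>) < K"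
    for m t \<omega>
    by (simp add: Cmix_def K_def variance_proxy_def)
  have "(\<forall>t\<ge>1. \<mu> \<in> (\<Inter>j\<in>{1..t}. Cmix j \<omega>)) \<longleftrightarrow> (\<forall>t\<ge>1. \<mu> \<in> Cmix t \<omega>)" for \<omega>
    by auto
  then show ?thesis
    using prob_Iint_avg_cond_mean_below[OF \<open>0 < K\<close>] prob_Iint_const_mean_below[OF \<open>0 < K\<close>] \<open>0 < K\<close>
    by (simp add: I0 Cmix_iff)
qed

end
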